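(* Let $\mathbf v$ be a smooth vector field on an open subset of $(0,T)\times\mathbb R^d$ (variables $(t,\mathbf x)$), $\mathbf W:=\frac12(\nabla\mathbf v-(\nabla\mathbf v)^{\mathsf T})$, $\mathbf D:=\frac12(\nabla\mathbf v+(\nabla\mathbf v)^{\mathsf T})$, and let $\mathbf G$ be a smooth $\mathbb R^{d\times d}_{\rm sym}$-valued field with $\mathbf A:=e^{\mathbf G}$. Define the logarithmic rate $\overset{\circ}{\mathbf G}{}^{\log}:=\partial_t\mathbf G+(\mathbf v\cdot\nabla)\mathbf G+2\mathsf{Ad}_{\mathbf G}\boldsymbol\Omega^{\log}$ with $\boldsymbol\Omega^{\log}:=\mathbf W-\mathcal L(\mathsf{Ad}_{\mathbf G})\mathbf D$, where $\mathcal L(x)=\coth x-\frac1x$ for $x\ne0$, $\mathcal L(0)=0$, and the upper-convected rate $\overset{\nabla}{\mathbf A}:=\partial_t\mathbf A+(\mathbf v\cdot\nabla)\mathbf A-(\nabla\mathbf v)\mathbf A-\mathbf A(\nabla\mathbf v)^{\mathsf T}$. Then $\overset{\circ}{\mathbf G}{}^{\log}=2\mathbf D+\frac{d\log\mathbf A}{d\mathbf A}\overset{\nabla}{\mathbf A}$, equivalently $\overset{\nabla}{\mathbf A}=\frac{de^{\mathbf G}}{d\mathbf G}\big(\overset{\circ}{\mathbf G}{}^{\log}-2\mathbf D\big)$.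
   Context: $(\nabla\mathbf v)_{ij}=\partial_{x_j}v_i$. $\mathsf{Ad}_{\mathbf G}\mathbf X=\tfrac12(\mathbf G\mathbf X-\mathbf X\mathbf G)$; for symmetric $\mathbf G=\mathbf Q\operatorname{diag}(g_i)\mathbf Q^{\mathsf T}$ ($\mathbf Q$ orthogonal) and real $h$, $h(\mathsf{Ad}_{\mathbf G})\mathbf X:=\mathbf Q\big([h(\frac{g_i-g_j}2)]\odot(\mathbf Q^{\mathsf T}\mathbf X\mathbf Q)\big)\mathbf Q^{\mathsf T}$ ($\odot$ entrywise product). Matrix exponential/logarithm are defined spectrally. For a $C^1$ function $f$ and symmetric $\mathbf M=\mathbf Q\operatorname{diag}(m_i)\mathbf Q^{\mathsf T}$, $\frac{df(\mathbf M)}{d\mathbf M}\mathbf X:=\mathbf Q\big([F(m_i,m_j)]\odot(\mathbf Q^{\mathsf T}\mathbf X\mathbf Q)\big)\mathbf Q^{\mathsf T}$ with $F(x,y)=\frac{f(x)-f(y)}{x-y}$ ($x\ne y$), $F(x,x)=f'(x)$ (the Fréchet derivative of the matrix function). *)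

theory Defs
  imports "HOL-Analysis.Analysis"
begin

type_synonym 'n mat = "real^'n^'n"

definition diag_mat :: "real^('n::finite) \<Rightarrow> ('n::finite) mat" where
  "diag_mat g = (\<chi> i j. if i = j then g $ i else 0)"

definition sym_mat :: "('n::finite) mat \<Rightarrow> bool" where
  "sym_mat M \<longleftrightarrow> transpose M = M"

definition spec_decomp :: "('n::finite) mat \<Rightarrow> ('n::finite) mat \<times> (real^('n::finite))" where
  "spec_decomp M = (SOME (Q, m). orthogonal_matrix Q \<and> M = Q ** diag_mat m ** transpose Q)"

definition spec_apply2 :: "(real \<Rightarrow> real \<Rightarrow> real) \<Rightarrow> ('n::finite) mat \<Rightarrow> ('n::finite) mat \<Rightarrow> ('n::finite) mat" where
  "spec_apply2 F M X = (case spec_decomp M of (Q, m) \<Rightarrow>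
      Q ** (\<chi> i j. F (m $ i) (m $ j) * (transpose Q ** X ** Q) $ i $ j) ** transpose Q)"

definition mat_fun :: "(real \<Rightarrow> real) \<Rightarrow> ('n::finite) mat \<Rightarrow> ('n::finite) mat" where
  "mat_fun f M = (case spec_decomp M of (Q, m) \<Rightarrow>
      Q ** diag_mat (\<chi> i. f (m $ i)) ** transpose Q)"

definition mat_exp :: "('n::finite) mat \<Rightarrow> ('n::finite) mat" where
  "mat_exp M = mat_fun exp M"

definition mat_log :: "('n::finite) mat \<Rightarrow> ('n::finite) mat" where
  "mat_log M = mat_fun ln M"

definition Ad :: "('n::finite) mat \<Rightarrow> ('n::finite) mat \<Rightarrow> ('n::finite) mat" where
  "Ad G X = (1/2) *\<^sub>R (G ** X - X ** G)"

text \<open>h(Ad_G) X.\<close>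
definition Ad_fun :: "(real \<Rightarrow> real) \<Rightarrow> ('n::finite) mat \<Rightarrow> ('n::finite) mat \<Rightarrow> ('n::finite) mat" where
  "Ad_fun h G X = spec_apply2 (\<lambda>a b. h ((a - b) / 2)) G X"

definition divdiff :: "(real \<Rightarrow> real) \<Rightarrow> real \<Rightarrow> real \<Rightarrow> real" where
  "divdiff f x y = (if x \<noteq> y then (f x - f y) / (x - y) else deriv f x)"

text \<open>Frechet derivative df(M)/dM applied to X, as in the paper.\<close>
definition dmat_fun :: "(real \<Rightarrow> real) \<Rightarrow> ('n::finite) mat \<Rightarrow> ('n::finite) mat \<Rightarrow> ('n::finite) mat" where
  "dmat_fun f M X = spec_apply2 (divdiff f) M X"

definition langevin :: "real \<Rightarrow> real" where
  "langevin x = (if x = 0 then 0 else cosh x / sinh x - 1 / x)"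

fun Ck_on :: "nat \<Rightarrow> ('a::real_normed_vector \<Rightarrow> 'b::real_normed_vector) \<Rightarrow> 'a set \<Rightarrow> bool" where
  "Ck_on 0 f U = continuous_on U f"
| "Ck_on (Suc k) f U = (f differentiable_on U \<and> continuous_on U f \<and>
      (\<forall>h. Ck_on k (\<lambda>y. frechet_derivative f (at y) h) U))"

definition smooth_on :: "('a::real_normed_vector \<Rightarrow> 'b::real_normed_vector) \<Rightarrow> 'a set \<Rightarrow> bool" where
  "smooth_on f U \<longleftrightarrow> (\<forall>k. Ck_on k f U)"

definition grad_v :: "(real \<times> (real^('n::finite)) \<Rightarrow> real^('n::finite)) \<Rightarrow> real \<times> (real^('n::finite)) \<Rightarrow> ('n::finite) mat" where
  "grad_v v p = (\<chi> i j. frechet_derivative v (at p) (0, axis j 1) $ i)"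

definition dt :: "(real \<times> (real^('n::finite)) \<Rightarrow> 'b::real_normed_vector) \<Rightarrow> real \<times> (real^('n::finite)) \<Rightarrow> 'b" where
  "dt F p = frechet_derivative F (at p) (1, 0)"

definition convect :: "(real \<times> (real^('n::finite)) \<Rightarrow> real^('n::finite)) \<Rightarrow> (real \<times> (real^('n::finite)) \<Rightarrow> 'b::real_normed_vector)
    \<Rightarrow> real \<times> (real^('n::finite)) \<Rightarrow> 'b" where
  "convect v F p = frechet_derivative F (at p) (0, v p)"

end

theory Submission
  imports Defs
begin

text \<open>In an orthonormal eigenbasis of G, with eigenvalues g_i, every operator of the statement
  acts entrywise: Ad_G and h(Ad_G) multiply the (i,j) entry by (g_i - g_j)/2 and h((g_i - g_j)/2),
  and d exp/dG multiplies it by the divided difference of exp at (g_i, g_j), whose inverse is the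
  factor of d log/dA. By the chain rule the material derivative of A = exp G is d exp/dG applied to
  that of G, so with L = grad v both identities reduce to the scalar identity
  (e^a - e^b) coth((a - b)/2) = e^a + e^b.

  The analytic input is the Daleckii-Krein formula: restricted to symmetric matrices, mat_exp has
  derivative dmat_fun exp M, because dmat_fun exp M H is the integral of exp(sM) H exp((1-s)M)
  over [0,1] and exp is Lipschitz on bounded sets.\<close>

lemma matrix_add_rdistrib: "((A::'a::semiring_1^'n^'m) + B) ** C = A ** C + B ** C"
  by (vector matrix_matrix_mult_def sum.distrib[symmetric] field_simps)

lemma matrix_diff_ldistrib: "(A::'a::ring_1^'n^'m) ** (B - C) = A ** B - A ** C"
  by (vector matrix_matrix_mult_def sum_subtractf[symmetric] field_simps)

lemma matrix_diff_rdistrib: "((A::'a::ring_1^'n^'m) - B) ** C = A ** C - B ** C"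
  by (vector matrix_matrix_mult_def sum_subtractf[symmetric] field_simps)

lemma matrix_mult_neg_right: "(A::'a::ring_1^'n^'m) ** (- B) = - (A ** B)"
  using matrix_diff_ldistrib[of A 0 B] by simp

lemma matrix_mult_neg_left: "(- A::'a::ring_1^'n^'m) ** B = - (A ** B)"
  using matrix_diff_rdistrib[of 0 A B] by simp

lemma bounded_bilinear_matrix_mult: "bounded_bilinear (\<lambda>A B::real^'n^'n. A ** B)"
  by (subst bilinear_conv_bounded_bilinear[symmetric])
     (auto simp: bilinear_def intro!: linearI simp: matrix_add_ldistrib matrix_add_rdistrib
       matrix_scalar_ac scalar_matrix_assoc)

lemma bounded_linear_matrix_conj: "bounded_linear (\<lambda>X::real^'n^'n. (A::real^'n^'n) ** X ** B)"
  by (subst linear_conv_bounded_linear[symmetric], rule linearI)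
     (simp_all add: matrix_add_ldistrib matrix_add_rdistrib matrix_scalar_ac scalar_matrix_assoc)

lemma bounded_linear_hadamard: "bounded_linear (\<lambda>X::real^'n^'m. \<chi> i j. F i j * X$i$j)"
  by (subst linear_conv_bounded_linear[symmetric], rule linearI) (simp_all add: vec_eq_iff algebra_simps)

lemma diag_mat_mult_left: "(diag_mat d ** A) $ i $ j = d$i * A$i$j"
  by (simp add: matrix_matrix_mult_def diag_mat_def if_distrib if_distribR sum.delta cong: if_cong)

lemma diag_mat_mult_right: "(A ** diag_mat d) $ i $ j = A$i$j * d$j"
  by (simp add: matrix_matrix_mult_def diag_mat_def if_distrib if_distribR sum.delta' cong: if_cong)

lemma transpose_diag_mat [simp]: "transpose (diag_mat d) = diag_mat d"
  by (simp add: transpose_def diag_mat_def vec_eq_iff)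

lemma diag_mat_scaleR: "diag_mat (c *\<^sub>R d) = c *\<^sub>R diag_mat d"
  by (simp add: vec_eq_iff diag_mat_def)

lemma transpose_nth: "transpose A $ i $ j = A $ j $ i"
  by (simp add: transpose_def)

lemma sym_mat_scaleR: "sym_mat X \<Longrightarrow> sym_mat (c *\<^sub>R (X::real^'n^'n))"
  by (simp add: sym_mat_def transpose_scalar)

lemma sym_mat_conj_diag: "sym_mat (Q ** diag_mat m ** transpose Q)"
  by (simp add: sym_mat_def matrix_transpose_mul matrix_mul_assoc)

lemma orthogonal_matrix_cancel:
  fixes Q :: "real^'n^'n"
  assumes "orthogonal_matrix Q"
  shows "transpose Q ** Q = mat 1" "Q ** transpose Q = mat 1"
    "A ** Q ** transpose Q = A" "A ** transpose Q ** Q = A"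
  using assms by (simp_all add: orthogonal_matrix_def flip: matrix_mul_assoc)

definition basis_change :: "real^'n^'n \<Rightarrow> real^'n^'n \<Rightarrow> real^'n^'n" where
  "basis_change Q X = transpose Q ** X ** Q"

lemma basis_change_inverse:
  "orthogonal_matrix Q \<Longrightarrow> Q ** basis_change Q X ** transpose Q = X"
  "orthogonal_matrix Q \<Longrightarrow> basis_change Q (Q ** Y ** transpose Q) = Y"
  by (simp_all add: basis_change_def matrix_mul_assoc orthogonal_matrix_cancel)

lemma basis_change_inj: "orthogonal_matrix Q \<Longrightarrow> basis_change Q X = basis_change Q Y \<Longrightarrow> X = Y"
  by (metis basis_change_inverse(1))

lemma basis_change_add: "basis_change Q (X + Y) = basis_change Q X + basis_change Q Y"
  by (simp add: basis_change_def matrix_add_ldistrib matrix_add_rdistrib)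

lemma basis_change_diff: "basis_change Q (X - Y) = basis_change Q X - basis_change Q Y"
  by (simp add: basis_change_def matrix_diff_ldistrib matrix_diff_rdistrib)

lemma basis_change_scaleR: "basis_change Q (c *\<^sub>R X) = c *\<^sub>R basis_change Q X"
  by (simp add: basis_change_def matrix_scalar_ac scalar_matrix_assoc)

lemma basis_change_mult:
  "orthogonal_matrix Q \<Longrightarrow> basis_change Q (X ** Y) = basis_change Q X ** basis_change Q Y"
  by (simp add: basis_change_def matrix_mul_assoc orthogonal_matrix_cancel)

lemma basis_change_transpose: "basis_change Q (transpose X) = transpose (basis_change Q X)"
  by (simp add: basis_change_def matrix_transpose_mul matrix_mul_assoc)

section \<open>Spectral theorem for real symmetric matrices\<close>

lemma sym_mat_inner_commute:
  assumes "sym_mat M"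
  shows "(M *v x) \<bullet> y = x \<bullet> (M *v y)"
proof -
  have "M *v x = x v* M" using assms transpose_matrix_vector[of M x] by (simp add: sym_mat_def)
  then show ?thesis by (simp add: dot_lmul_matrix)
qed

lemma quadratic_nonpos_imp_linear_coeff_zero:
  fixes a c :: real
  assumes "\<And>t. 2 * t * a + t\<^sup>2 * c \<le> 0"
  shows "a = 0"
proof (rule ccontr)
  assume "a \<noteq> 0"
  define t where "t = a / (\<bar>c\<bar> + 1)"
  have a: "a = t * (\<bar>c\<bar> + 1)" by (simp add: t_def add_pos_nonneg)
  then have "t \<noteq> 0" using \<open>a \<noteq> 0\<close> by auto
  have "2 * t * a + t\<^sup>2 * c = t\<^sup>2 * (2 * \<bar>c\<bar> + 2 + c)"
    by (simp add: a algebra_simps power2_eq_square)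
  also have "\<dots> > 0" using \<open>t \<noteq> 0\<close> by (intro mult_pos_pos) auto
  finally show False using assms[of t] by linarith
qed

text \<open>Perturbing u along w changes the quadratic form by 2 t (w \<bullet> M u) + O(t^2).\<close>
lemma sym_mat_rayleigh_max_orthogonal:
  fixes M :: "real^'n^'n"
  assumes sym: "sym_mat M" and V: "subspace V" and u: "u \<in> V" "norm u = 1"
    and max: "\<And>y. y \<in> V \<Longrightarrow> norm y = 1 \<Longrightarrow> y \<bullet> (M *v y) \<le> u \<bullet> (M *v u)"
    and w: "w \<in> V" "w \<bullet> u = 0"
  shows "w \<bullet> (M *v u) = 0"
proof -
  define l where "l = u \<bullet> (M *v u)"
  have homogeneous: "y \<bullet> (M *v y) \<le> l * (norm y)\<^sup>2" if "y \<in> V" for y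
  proof (cases "y = 0")
    case False
    have "(y /\<^sub>R norm y) \<bullet> (M *v (y /\<^sub>R norm y)) \<le> l"
      using max[of "y /\<^sub>R norm y"] V that False by (simp add: l_def subspace_scale)
    then show ?thesis
      using False by (simp add: matrix_vector_mult_scaleR field_simps power2_eq_square)
  qed simp
  have uu: "u \<bullet> u = 1" using u(2) by (simp add: norm_eq_1)
  have sym_uw: "u \<bullet> (M *v w) = w \<bullet> (M *v u)"
    using sym_mat_inner_commute[OF sym, of u w] by (simp add: inner_commute)
  show ?thesis
  proof (rule quadratic_nonpos_imp_linear_coeff_zero[where c = "w \<bullet> (M *v w) - l * (w \<bullet> w)"])
    fix t :: real
    have "u + t *\<^sub>R w \<in> V" using V u w by (simp add: subspace_add subspace_scale)
    then have "(u + t *\<^sub>R w) \<bullet> (M *v (u + t *\<^sub>R w)) \<le> l * (norm (u + t *\<^sub>R w))\<^sup>2"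
      by (rule homogeneous)
    moreover have "(norm (u + t *\<^sub>R w))\<^sup>2 = 1 + t\<^sup>2 * (w \<bullet> w)"
      using uu w(2) unfolding power2_norm_eq_inner by (simp add: inner_add_left inner_add_right
          inner_commute power2_eq_square)
    ultimately show "2 * t * (w \<bullet> (M *v u)) + t\<^sup>2 * (w \<bullet> (M *v w) - l * (w \<bullet> w)) \<le> 0"
      using sym_uw
      by (simp add: matrix_vector_right_distrib matrix_vector_mult_scaleR
          inner_add_left inner_add_right inner_commute l_def power2_eq_square algebra_simps)
  qed
qed

lemma sym_mat_eigenvector_in_invariant_subspace:
  fixes M :: "real^'n^'n"
  assumes sym: "sym_mat M" and V: "subspace V" and inv: "\<And>x. x \<in> V \<Longrightarrow> M *v x \<in> V"
    and nontriv: "V \<noteq> {0}"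
  obtains u c where "u \<in> V" "norm u = 1" "M *v u = c *\<^sub>R u"
proof -
  define K where "K = sphere 0 1 \<inter> V"
  have "compact K"
    unfolding K_def using closed_subspace[OF V] by (intro compact_Int_closed) auto
  obtain x where "x \<in> V" "x \<noteq> 0" using nontriv subspace_0[OF V] by blast
  then have "x /\<^sub>R norm x \<in> K" using V by (simp add: K_def subspace_scale)
  then have "K \<noteq> {}" by auto
  moreover have "continuous_on K (\<lambda>y. y \<bullet> (M *v y))"
    by (intro continuous_intros linear_continuous_on matrix_vector_mul_bounded_linear)
  ultimately obtain u where "u \<in> K" and max: "\<And>y. y \<in> K \<Longrightarrow> y \<bullet> (M *v y) \<le> u \<bullet> (M *v u)"
    using continuous_attains_sup[OF \<open>compact K\<close>] by blast
  then have u: "u \<in> V" "norm u = 1" by (auto simp: K_def)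
  define l where "l = u \<bullet> (M *v u)"
  define w where "w = M *v u - l *\<^sub>R u"
  have "w \<in> V" using V u inv by (simp add: w_def subspace_diff subspace_scale)
  moreover have wu: "w \<bullet> u = 0"
    using u(2) by (simp add: w_def l_def inner_diff_left inner_commute[of "M *v u" u] norm_eq_1)
  ultimately have "w \<bullet> (M *v u) = 0"
    using sym_mat_rayleigh_max_orthogonal[OF sym V u] max by (auto simp: K_def)
  then have "w \<bullet> w = 0" using wu by (simp add: w_def inner_diff_right)
  then have "M *v u = l *\<^sub>R u" by (simp add: w_def)
  then show thesis using u that by blast
qed

lemma sym_mat_orthonormal_eigenvectors:
  fixes M :: "real^'n^'n"
  assumes sym: "sym_mat M" and "k \<le> CARD('n)"
  shows "\<exists>S. finite S \<and> card S = k \<and> pairwise orthogonal S \<and>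
           (\<forall>s\<in>S. norm s = 1 \<and> (\<exists>c. M *v s = c *\<^sub>R s))"
  using assms(2)
proof (induction k)
  case 0
  show ?case by (intro exI[of _ "{}"]) auto
next
  case (Suc k)
  then obtain S where S: "finite S" "card S = k" "pairwise orthogonal S"
      and eig: "\<forall>s\<in>S. norm s = 1 \<and> (\<exists>c. M *v s = c *\<^sub>R s)" by auto
  define V where "V = {y. \<forall>s\<in>S. orthogonal s y}"
  have V: "subspace V" unfolding V_def by (rule subspace_orthogonal_to_vectors)
  have inv: "M *v x \<in> V" if "x \<in> V" for x
  proof -
    have "s \<bullet> (M *v x) = 0" if "s \<in> S" for s
      using eig \<open>s \<in> S\<close> \<open>x \<in> V\<close> sym_mat_inner_commute[OF sym, of s x]
      by (auto simp: V_def orthogonal_def)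
    then show ?thesis by (simp add: V_def orthogonal_def)
  qed
  have "independent S"
    using pairwise_orthogonal_independent[OF S(3)] eig by fastforce
  then have "dim S < DIM(real^'n)" using S(2) Suc.prems by (simp add: dim_eq_card_independent)
  then obtain x where "x \<noteq> 0" "\<And>y. y \<in> span S \<Longrightarrow> orthogonal x y"
    using orthogonal_to_subspace_exists by blast
  then have "x \<in> V" by (auto simp: V_def orthogonal_commute span_base)
  then have "V \<noteq> {0}" using \<open>x \<noteq> 0\<close> by blast
  then obtain u c where u: "u \<in> V" "norm u = 1" "M *v u = c *\<^sub>R u"
    using sym_mat_eigenvector_in_invariant_subspace[OF sym V inv] by blast
  have "u \<notin> S" using u(1,2) by (auto simp: V_def orthogonal_def)
  show ?case
  proof (intro exI[of _ "insert u S"] conjI)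
    show "pairwise orthogonal (insert u S)"
      using S(3) u(1) by (auto simp: pairwise_insert V_def orthogonal_commute)
  qed (use S u eig \<open>u \<notin> S\<close> in auto)
qed

theorem sym_mat_orthogonal_diagonalization:
  fixes M :: "real^'n^'n"
  assumes sym: "sym_mat M"
  obtains Q m where "orthogonal_matrix Q" "M = Q ** diag_mat m ** transpose Q"
proof -
  obtain S where S: "finite S" "card S = CARD('n)" "pairwise orthogonal S"
      and eig: "\<forall>s\<in>S. norm s = 1 \<and> (\<exists>c. M *v s = c *\<^sub>R s)"
    using sym_mat_orthonormal_eigenvectors[OF sym order.refl] by blast
  obtain f where f: "bij_betw f (UNIV::'n set) S"
    using finite_same_card_bij[of "UNIV::'n set" S] S(1,2) by auto
  have fS: "f i \<in> S" for i using f by (auto simp: bij_betw_def)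
  define Q where "Q = (\<chi> i j. f j $ i)"
  have "norm (f i) = 1" for i using fS eig by blast
  moreover have "orthogonal (f i) (f j)" if "i \<noteq> j" for i j
    using S(3) f fS that by (metis bij_betw_imp_inj_on inj_def pairwise_def)
  ultimately have Q: "orthogonal_matrix Q"
    by (simp add: orthogonal_matrix_orthonormal_columns column_def Q_def)
  define m where "m = (\<chi> j. SOME c. M *v f j = c *\<^sub>R f j)"
  have eigf: "M *v f j = m$j *\<^sub>R f j" for j
    unfolding m_def using someI_ex[of "\<lambda>c. M *v f j = c *\<^sub>R f j"] fS eig by auto
  have "M ** Q = Q ** diag_mat m"
    using eigf by (simp add: vec_eq_iff diag_mat_mult_right)
      (simp add: matrix_matrix_mult_def matrix_vector_mult_def Q_def)
  then have "M = Q ** diag_mat m ** transpose Q"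
    by (metis Q orthogonal_matrix_cancel(3))
  with Q that show thesis by blast
qed

lemma spec_decomp:
  assumes "sym_mat M"
  shows "orthogonal_matrix (fst (spec_decomp M))"
    and "M = fst (spec_decomp M) ** diag_mat (snd (spec_decomp M)) ** transpose (fst (spec_decomp M))"
proof -
  have "\<exists>Qm. orthogonal_matrix (fst Qm) \<and> M = fst Qm ** diag_mat (snd Qm) ** transpose (fst Qm)"
    using sym_mat_orthogonal_diagonalization[OF assms] by (metis fst_conv snd_conv)
  moreover have "spec_decomp M =
      (SOME Qm. orthogonal_matrix (fst Qm) \<and> M = fst Qm ** diag_mat (snd Qm) ** transpose (fst Qm))"
    unfolding spec_decomp_def by (rule arg_cong[where f=Eps]) (simp add: fun_eq_iff split_beta)
  ultimately show "orthogonal_matrix (fst (spec_decomp M))"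
    and "M = fst (spec_decomp M) ** diag_mat (snd (spec_decomp M)) ** transpose (fst (spec_decomp M))"
    by (metis (mono_tags, lifting) someI_ex)+
qed

section \<open>Spectral calculus\<close>

lemma hadamard_intertwine:
  fixes R Y :: "real^'n^'n"
  assumes "\<And>i j. R$i$j \<noteq> 0 \<Longrightarrow> mu$i = m$j"
  shows "(\<chi> i k. F (mu$i) (mu$k) * (R ** Y ** transpose R)$i$k)
       = R ** (\<chi> j l. F (m$j) (m$l) * Y$j$l) ** transpose R"
proof -
  have entry: "F (mu$i) (mu$k) * (R$i$j * Y$j$l * R$k$l) = R$i$j * (F (m$j) (m$l) * Y$j$l) * R$k$l"
    for i j k l
    using assms[of i j] assms[of k l] by (cases "R$i$j = 0 \<or> R$k$l = 0") auto
  show ?thesis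
    by (simp add: vec_eq_iff matrix_matrix_mult_def transpose_def sum_distrib_left sum_distrib_right entry)
qed

text \<open>Independence of the diagonalisation chosen by spec_decomp: the change of eigenbasis R
  between two diagonalisations only mixes eigenvectors with equal eigenvalues.\<close>
lemma spec_apply2_decomp:
  fixes M Q :: "real^'n^'n"
  assumes Q: "orthogonal_matrix Q" and M: "M = Q ** diag_mat m ** transpose Q"
  shows "spec_apply2 F M X = Q ** (\<chi> i j. F (m$i) (m$j) * basis_change Q X $i$j) ** transpose Q"
proof -
  have "sym_mat M" using M sym_mat_conj_diag by simp
  obtain P mu where sd: "spec_decomp M = (P, mu)" by (cases "spec_decomp M")
  have P: "orthogonal_matrix P" and MP: "M = P ** diag_mat mu ** transpose P"
    using spec_decomp[OF \<open>sym_mat M\<close>] sd by auto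
  define R where "R = transpose P ** Q"
  have "diag_mat mu ** R = transpose P ** M ** Q"
    unfolding MP R_def using P by (simp add: matrix_mul_assoc orthogonal_matrix_cancel)
  also have "\<dots> = R ** diag_mat m"
    unfolding M R_def using Q by (simp add: matrix_mul_assoc orthogonal_matrix_cancel)
  finally have "mu$i * R$i$j = R$i$j * m$j" for i j
    by (metis diag_mat_mult_left diag_mat_mult_right)
  then have R: "R$i$j \<noteq> 0 \<Longrightarrow> mu$i = m$j" for i j by (metis mult.commute mult_right_cancel)
  have PR: "P ** R = Q" unfolding R_def using P by (simp add: matrix_mul_assoc orthogonal_matrix_cancel)
  have "basis_change P X = R ** basis_change Q X ** transpose R"
    using Q by (simp add: R_def basis_change_def matrix_transpose_mul matrix_mul_assoc
        orthogonal_matrix_cancel)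
  then have "spec_apply2 F M X
      = P ** (R ** (\<chi> i j. F (m$i) (m$j) * basis_change Q X $i$j) ** transpose R) ** transpose P"
    by (simp add: spec_apply2_def sd hadamard_intertwine[OF R] basis_change_def)
  then show ?thesis
    by (simp add: matrix_mul_assoc matrix_transpose_mul flip: PR)
qed

lemma basis_change_spec_apply2:
  assumes "orthogonal_matrix Q" "M = Q ** diag_mat m ** transpose Q"
  shows "basis_change Q (spec_apply2 F M X) = (\<chi> i j. F (m$i) (m$j) * basis_change Q X $i$j)"
  using assms by (simp add: spec_apply2_decomp basis_change_inverse)

lemma mat_fun_decomp:
  fixes M Q :: "real^'n^'n"
  assumes Q: "orthogonal_matrix Q" and M: "M = Q ** diag_mat m ** transpose Q"
  shows "mat_fun f M = Q ** diag_mat (\<chi> i. f (m$i)) ** transpose Q"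
proof -
  have diag: "(\<chi> i j. g (d$i) * basis_change P (mat 1) $i$j) = diag_mat (\<chi> i. g (d$i))"
    if "orthogonal_matrix P" for P :: "real^'n^'n" and g d
  proof -
    have "basis_change P (mat 1) = mat 1"
      using that by (simp add: basis_change_def orthogonal_matrix_cancel)
    then show ?thesis by (simp add: vec_eq_iff mat_def diag_mat_def)
  qed
  have "sym_mat M" using M sym_mat_conj_diag by simp
  obtain P mu where sd: "spec_decomp M = (P, mu)" by (cases "spec_decomp M")
  have "orthogonal_matrix P" using spec_decomp(1)[OF \<open>sym_mat M\<close>] sd by auto
  then have "mat_fun f M = spec_apply2 (\<lambda>a b. f a) M (mat 1)"
    by (simp add: mat_fun_def spec_apply2_def sd diag[symmetric] basis_change_def)
  then show ?thesis by (simp add: spec_apply2_decomp[OF Q M] diag[OF Q])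
qed

lemma mat_exp_scaleR_decomp:
  assumes "orthogonal_matrix Q" "M = Q ** diag_mat m ** transpose Q"
  shows "mat_exp (c *\<^sub>R M) = Q ** diag_mat (\<chi> i. exp (c * m$i)) ** transpose Q"
proof -
  have "c *\<^sub>R M = Q ** diag_mat (c *\<^sub>R m) ** transpose Q"
    using assms(2) by (simp add: diag_mat_scaleR matrix_scalar_ac scalar_matrix_assoc)
  then show ?thesis by (simp add: mat_exp_def mat_fun_decomp[OF assms(1)])
qed

lemma bounded_linear_spec_apply2:
  assumes "sym_mat M"
  shows "bounded_linear (spec_apply2 F M)"
proof -
  obtain Q m where Q: "orthogonal_matrix Q" "M = Q ** diag_mat m ** transpose Q"
    using sym_mat_orthogonal_diagonalization[OF assms] .
  have "bounded_linear (\<lambda>X. Q ** (\<chi> i j. F (m$i) (m$j) * basis_change Q X $i$j) ** transpose Q)"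
    unfolding basis_change_def
    by (rule bounded_linear_compose[OF bounded_linear_matrix_conj
          bounded_linear_compose[OF bounded_linear_hadamard bounded_linear_matrix_conj]])
  moreover have "spec_apply2 F M =
      (\<lambda>X. Q ** (\<chi> i j. F (m$i) (m$j) * basis_change Q X $i$j) ** transpose Q)"
    using spec_apply2_decomp[OF Q] by blast
  ultimately show ?thesis by simp
qed

section \<open>Frobenius norm\<close>

lemma norm_matrix_sq_rows: "(norm (A::real^'n^'m))\<^sup>2 = (\<Sum>i\<in>UNIV. (norm (A$i))\<^sup>2)"
  by (simp add: power2_norm_eq_inner inner_vec_def)

lemma norm_matrix_sq_entries: "(norm (A::real^'n^'m))\<^sup>2 = (\<Sum>i\<in>UNIV. \<Sum>j\<in>UNIV. (A$i$j)\<^sup>2)"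
  unfolding norm_matrix_sq_rows power2_norm_eq_inner inner_vec_def by (simp add: power2_eq_square)

lemma norm_transpose: "norm (transpose (A::real^'n^'m)) = norm A"
proof -
  have "(norm (transpose A))\<^sup>2 = (norm A)\<^sup>2"
    unfolding norm_matrix_sq_entries transpose_nth by (rule sum.swap)
  then show ?thesis by simp
qed

lemma norm_matrix_mult_le: "norm ((A::real^'n^'m) ** (B::real^'p^'n)) \<le> norm A * norm B"
proof (rule power2_le_imp_le)
  have entry: "((A ** B)$i$j)\<^sup>2 \<le> (norm (A$i))\<^sup>2 * (norm (transpose B $ j))\<^sup>2" for i j
  proof -
    have "(A ** B)$i$j = A$i \<bullet> transpose B $ j"
      by (simp add: matrix_matrix_mult_def inner_vec_def transpose_def)
    then show ?thesis
      using Cauchy_Schwarz_ineq[of "A$i" "transpose B $ j"] by (simp add: power2_norm_eq_inner)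
  qed
  have "(norm (A ** B))\<^sup>2 \<le> (\<Sum>i\<in>UNIV. \<Sum>j\<in>UNIV. (norm (A$i))\<^sup>2 * (norm (transpose B $ j))\<^sup>2)"
    unfolding norm_matrix_sq_entries[of "A ** B"] by (intro sum_mono entry)
  also have "\<dots> = (norm A)\<^sup>2 * (norm (transpose B))\<^sup>2"
    by (simp only: norm_matrix_sq_rows sum_product)
  finally show "(norm (A ** B))\<^sup>2 \<le> (norm A * norm B)\<^sup>2"
    by (simp add: norm_transpose power_mult_distrib)
qed simp

lemma norm_orthogonal_matrix_vector_mult:
  fixes Q :: "real^'n^'n"
  assumes "orthogonal_matrix Q"
  shows "norm (Q *v x) = norm x"
  using assms orthogonal_transformation_norm[of "(*v) Q"]
  by (simp add: orthogonal_transformation_matrix)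

lemma norm_matrix_mult_orthogonal_right:
  fixes Q :: "real^'n^'n"
  assumes "orthogonal_matrix Q"
  shows "norm ((A::real^'n^'m) ** Q) = norm A"
proof -
  have "(A ** Q)$i = A$i v* Q" for i
    by (simp add: vec_eq_iff matrix_matrix_mult_def vector_matrix_mult_def)
  moreover have "norm (x v* Q) = norm x" for x
    using norm_orthogonal_matrix_vector_mult[of "transpose Q" x] assms by simp
  ultimately have "(norm (A ** Q))\<^sup>2 = (norm A)\<^sup>2"
    by (simp add: norm_matrix_sq_rows)
  then show ?thesis by simp
qed

lemma norm_orthogonal_conj:
  fixes Q :: "real^'n^'n"
  assumes "orthogonal_matrix Q"
  shows "norm (Q ** A ** transpose Q) = norm A"
proof -
  have "norm (Q ** A) = norm A"
    using norm_matrix_mult_orthogonal_right[of "transpose Q" "transpose A"] assms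
    by (simp add: norm_transpose flip: matrix_transpose_mul)
  then show ?thesis using assms by (simp add: norm_matrix_mult_orthogonal_right)
qed

lemma norm_diag_mat: "norm (diag_mat d) = norm d"
proof -
  have "(norm (diag_mat d))\<^sup>2 = (\<Sum>i\<in>UNIV. \<Sum>j\<in>UNIV. if i = j then (d$i)\<^sup>2 else 0)"
    unfolding norm_matrix_sq_entries by (intro sum.cong) (auto simp: diag_mat_def)
  also have "\<dots> = (norm d)\<^sup>2"
    unfolding power2_norm_eq_inner inner_vec_def by (simp add: power2_eq_square)
  finally have "(norm (diag_mat d))\<^sup>2 = (norm d)\<^sup>2" .
  then show ?thesis by simp
qed

section \<open>Derivative of the matrix exponential on symmetric matrices\<close>

lemma norm_eigenvalues:
  fixes Q :: "real^'n^'n"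
  assumes "orthogonal_matrix Q" "M = Q ** diag_mat m ** transpose Q"
  shows "norm m = norm M"
  using assms by (simp add: norm_orthogonal_conj norm_diag_mat)

lemma norm_mat_exp_le:
  fixes X :: "real^'n^'n"
  assumes "sym_mat X"
  shows "norm (mat_exp X) \<le> CARD('n) * exp (norm X)"
proof -
  obtain Q x where Q: "orthogonal_matrix Q" "X = Q ** diag_mat x ** transpose Q"
    using sym_mat_orthogonal_diagonalization[OF assms] .
  have "norm (mat_exp X) = norm (\<chi> i. exp (x$i))"
    by (simp add: mat_exp_def mat_fun_decomp[OF Q] norm_orthogonal_conj[OF Q(1)] norm_diag_mat)
  also have "\<dots> \<le> (\<Sum>i\<in>UNIV. \<bar>exp (x$i)\<bar>)"
    using norm_le_l1_cart[of "\<chi> i. exp (x$i)"] by simp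
  also have "\<dots> \<le> CARD('n) * exp (norm X)"
  proof (rule sum_bounded_above)
    fix i
    have "x$i \<le> norm X" using component_le_norm_cart[of x i] norm_eigenvalues[OF Q] by simp
    then show "\<bar>exp (x$i)\<bar> \<le> exp (norm X)" by simp
  qed
  finally show ?thesis .
qed

lemma norm_scaleR_le:
  assumes "\<bar>c\<bar> \<le> 1" "norm x \<le> R"
  shows "norm (c *\<^sub>R x) \<le> R"
  using assms mult_left_le_one_le[of "norm x" "\<bar>c\<bar>"] by simp

lemma norm_mat_exp_scaleR_le:
  fixes X :: "real^'n^'n"
  assumes "sym_mat X" "\<bar>c\<bar> \<le> 1" "norm X \<le> R"
  shows "norm (mat_exp (c *\<^sub>R X)) \<le> CARD('n) * exp R"
proof -
  have "exp (norm (c *\<^sub>R X)) \<le> exp R" using norm_scaleR_le[OF assms(2,3)] by simp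
  then show ?thesis
    using norm_mat_exp_le[OF sym_mat_scaleR[OF assms(1)], of c] by (simp add: order_trans)
qed

lemma has_vector_derivative_matrix_entrywise:
  fixes f :: "real \<Rightarrow> real^'n^'m"
  assumes "\<And>i j. ((\<lambda>s. f s $ i $ j) has_real_derivative f' $ i $ j) (at t)"
  shows "(f has_vector_derivative f') (at t)"
  unfolding has_vector_derivative_def
proof (subst has_derivative_componentwise_within, intro ballI)
  fix b :: "real^'n^'m" assume "b \<in> Basis"
  then obtain i j where b: "b = axis i (axis j 1)" unfolding Basis_vec_def by auto
  have "(\<lambda>s. f s \<bullet> b) = (\<lambda>s. f s $ i $ j)" "(\<lambda>h. (h *\<^sub>R f') \<bullet> b) = (\<lambda>h. h *\<^sub>R f' $ i $ j)"
    by (simp_all add: b inner_axis)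
  then show "((\<lambda>s. f s \<bullet> b) has_derivative (\<lambda>h. (h *\<^sub>R f') \<bullet> b)) (at t)"
    using assms[of i j, unfolded has_real_derivative_iff_has_vector_derivative
        has_vector_derivative_def] by (simp only:)
qed

lemma has_vector_derivative_orthogonal_conj_entrywise:
  fixes Q :: "real^'n^'n"
  assumes "\<And>i j. ((\<lambda>s. f s i j) has_real_derivative f' i j) (at t)"
  shows "((\<lambda>s. Q ** (\<chi> i j. f s i j) ** transpose Q) has_vector_derivative
           Q ** (\<chi> i j. f' i j) ** transpose Q) (at t)"
  by (rule bounded_linear.has_vector_derivative[OF bounded_linear_matrix_conj
        has_vector_derivative_matrix_entrywise]) (simp add: assms)

lemma orthogonal_conj_mult:
  fixes Q :: "real^'n^'n"
  assumes "orthogonal_matrix Q"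
  shows "(Q ** A ** transpose Q) ** (Q ** B ** transpose Q) = Q ** (A ** B) ** transpose Q"
  using assms by (simp add: matrix_mul_assoc orthogonal_matrix_cancel)

lemma diag_mat_mult: "diag_mat d ** diag_mat e = diag_mat (\<chi> i. d$i * e$i)"
  by (simp add: vec_eq_iff diag_mat_mult_left) (simp add: diag_mat_def)

lemma mat_exp_scaleR_commute:
  assumes "sym_mat X"
  shows "mat_exp (c *\<^sub>R X) ** X = X ** mat_exp (c *\<^sub>R X)"
proof -
  obtain Q x where Q: "orthogonal_matrix Q" "X = Q ** diag_mat x ** transpose Q"
    using sym_mat_orthogonal_diagonalization[OF assms] .
  show ?thesis
    unfolding mat_exp_scaleR_decomp[OF Q]
    by (simp add: Q(2) orthogonal_conj_mult[OF Q(1)] diag_mat_mult mult.commute)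
qed

lemma has_vector_derivative_mat_exp_ray:
  fixes X :: "real^'n^'n"
  assumes "sym_mat X"
  shows "((\<lambda>s. mat_exp ((a * s + b) *\<^sub>R X)) has_vector_derivative
           a *\<^sub>R (mat_exp ((a * t + b) *\<^sub>R X) ** X)) (at t)"
proof -
  obtain Q x where Q: "orthogonal_matrix Q" "X = Q ** diag_mat x ** transpose Q"
    using sym_mat_orthogonal_diagonalization[OF assms] .
  have "((\<lambda>s. Q ** diag_mat (\<chi> i. exp ((a * s + b) * x$i)) ** transpose Q) has_vector_derivative
      Q ** diag_mat (\<chi> i. a * x$i * exp ((a * t + b) * x$i)) ** transpose Q) (at t)"
    unfolding diag_mat_def
    by (rule has_vector_derivative_orthogonal_conj_entrywise) (auto intro!: derivative_eq_intros)
  moreover have "Q ** diag_mat (\<chi> i. a * x$i * exp ((a * t + b) * x$i)) ** transpose Q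
      = a *\<^sub>R (mat_exp ((a * t + b) *\<^sub>R X) ** X)"
  proof -
    have "diag_mat (\<chi> i. a * x$i * exp ((a * t + b) * x$i))
        = a *\<^sub>R (diag_mat (\<chi> i. exp ((a * t + b) * x$i)) ** diag_mat x)"
      by (simp add: diag_mat_mult flip: diag_mat_scaleR) (simp add: vec_eq_iff diag_mat_def)
    then show ?thesis
      unfolding mat_exp_scaleR_decomp[OF Q] by (subst Q(2))
        (simp add: orthogonal_matrix_cancel[OF Q(1)] matrix_scalar_ac scalar_matrix_assoc matrix_mul_assoc)
  qed
  ultimately show ?thesis by (simp add: mat_exp_scaleR_decomp[OF Q])
qed

lemma mat_exp_0: "mat_exp (0::real^'n^'n) = mat 1"
proof -
  have "(0::real^'n^'n) = mat 1 ** diag_mat 0 ** transpose (mat 1)"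
    by (simp add: vec_eq_iff diag_mat_def)
  moreover have "diag_mat (\<chi> i. exp ((0::real^'n)$i)) = mat 1"
    by (simp add: vec_eq_iff diag_mat_def mat_def)
  ultimately show ?thesis
    by (simp add: mat_exp_def mat_fun_decomp[OF orthogonal_matrix_id])
qed

lemma has_vector_derivative_mat_exp_path:
  fixes M N :: "real^'n^'n"
  assumes M: "sym_mat M" and N: "sym_mat N"
  shows "((\<lambda>r. mat_exp (r *\<^sub>R N) ** mat_exp ((1 - r) *\<^sub>R M)) has_vector_derivative
          mat_exp (r *\<^sub>R N) ** (N - M) ** mat_exp ((1 - r) *\<^sub>R M)) (at r)"
proof -
  define EN where "EN = (\<lambda>s. mat_exp (s *\<^sub>R N))"
  define EM where "EM = (\<lambda>s. mat_exp ((1 - s) *\<^sub>R M))"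
  have dN: "(EN has_vector_derivative EN r ** N) (at r)"
    using has_vector_derivative_mat_exp_ray[OF N, of 1 0 r] by (simp add: EN_def)
  have dM: "(EM has_vector_derivative - (EM r ** M)) (at r)"
    using has_vector_derivative_mat_exp_ray[OF M, of "- 1" 1 r] by (simp add: EM_def)
  have "EM r ** M = M ** EM r"
    using mat_exp_scaleR_commute[OF M, of "1 - r"] by (simp add: EM_def)
  then have "EN r ** - (EM r ** M) + EN r ** N ** EM r = EN r ** N ** EM r - EN r ** (M ** EM r)"
    by (simp add: matrix_mult_neg_right)
  also have "\<dots> = EN r ** (N - M) ** EM r"
    by (simp add: matrix_diff_ldistrib matrix_diff_rdistrib matrix_mul_assoc)
  finally have "EN r ** - (EM r ** M) + EN r ** N ** EM r = EN r ** (N - M) ** EM r" .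
  with bounded_bilinear.has_vector_derivative[OF bounded_bilinear_matrix_mult dN dM]
  show ?thesis by (simp add: EN_def EM_def)
qed

lemma norm_diff_le_vector_derivative_bound:
  fixes f :: "real \<Rightarrow> 'a::real_inner"
  assumes f': "\<And>s. (f has_vector_derivative f' s) (at s)"
    and bound: "\<And>s. 0 < s \<Longrightarrow> s < 1 \<Longrightarrow> norm (f' s) \<le> K"
  shows "norm (f 1 - f 0) \<le> K"
proof -
  have "continuous_on {0..1} f"
    using f' by (intro continuous_at_imp_continuous_on) (blast intro: has_vector_derivative_continuous)
  then obtain s where "s \<in> {0<..<1}" "norm (f 1 - f 0) \<le> norm ((1 - 0) *\<^sub>R f' s)"
    using mvt_general[of 0 1 f "\<lambda>s h. h *\<^sub>R f' s"] f' by (auto simp: has_vector_derivative_def)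
  then show ?thesis using bound[of s] by simp
qed

lemma mat_exp_lipschitz:
  fixes M N :: "real^'n^'n"
  assumes M: "sym_mat M" "norm M \<le> R" and N: "sym_mat N" "norm N \<le> R"
  shows "norm (mat_exp N - mat_exp M) \<le> (CARD('n) * exp R)\<^sup>2 * norm (N - M)"
proof -
  define B where "B = CARD('n) * exp R"
  have "norm (mat_exp (s *\<^sub>R N) ** (N - M) ** mat_exp ((1 - s) *\<^sub>R M)) \<le> B\<^sup>2 * norm (N - M)"
    if "0 < s" "s < 1" for s
  proof -
    have "norm (mat_exp (s *\<^sub>R N) ** (N - M) ** mat_exp ((1 - s) *\<^sub>R M))
        \<le> norm (mat_exp (s *\<^sub>R N)) * norm (N - M) * norm (mat_exp ((1 - s) *\<^sub>R M))"
      by (meson norm_matrix_mult_le order_trans mult_right_mono norm_ge_zero)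
    also have "\<dots> \<le> B * norm (N - M) * B"
      using that unfolding B_def
      by (intro mult_mono norm_mat_exp_scaleR_le M N) auto
    finally show ?thesis by (simp add: power2_eq_square mult_ac)
  qed
  then have "norm (mat_exp (1 *\<^sub>R N) ** mat_exp ((1 - 1) *\<^sub>R M)
      - mat_exp (0 *\<^sub>R N) ** mat_exp ((1 - 0) *\<^sub>R M)) \<le> B\<^sup>2 * norm (N - M)"
    by (intro norm_diff_le_vector_derivative_bound[OF has_vector_derivative_mat_exp_path[OF M(1) N(1)]])
  then show ?thesis by (simp add: B_def mat_exp_0)
qed

lemma divdiff_exp_diag: "divdiff exp a a = exp a"
  by (simp add: divdiff_def DERIV_imp_deriv[OF DERIV_exp])

definition exp_path_primitive :: "real \<Rightarrow> real \<Rightarrow> real \<Rightarrow> real" where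
  "exp_path_primitive x y s =
    (if x = y then s * exp x else (exp (s * x + (1 - s) * y) - exp y) / (x - y))"

lemma has_real_derivative_exp_path_primitive:
  "(exp_path_primitive x y has_real_derivative exp (s * x + (1 - s) * y)) (at s)"
proof (cases "x = y")
  case True
  then have "exp_path_primitive x y = (\<lambda>s. s * exp x)"
    by (simp add: exp_path_primitive_def fun_eq_iff)
  moreover have "s * x + (1 - s) * x = x" by (simp add: algebra_simps)
  ultimately show ?thesis using True by (auto intro!: derivative_eq_intros)
next
  case False
  then have "exp_path_primitive x y = (\<lambda>s. (exp (s * x + (1 - s) * y) - exp y) * inverse (x - y))"
    by (simp add: exp_path_primitive_def fun_eq_iff divide_inverse)
  moreover have "((\<lambda>s. (exp (s * x + (1 - s) * y) - exp y) * inverse (x - y)) has_real_derivative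
      exp (s * x + (1 - s) * y) * (x - y) * inverse (x - y)) (at s)"
    by (auto intro!: derivative_eq_intros simp: algebra_simps)
  moreover have "exp (s * x + (1 - s) * y) * (x - y) * inverse (x - y) = exp (s * x + (1 - s) * y)"
    using False by simp
  ultimately show ?thesis by (simp only:)
qed

lemma exp_path_primitive_0: "exp_path_primitive x y 0 = 0"
  by (simp add: exp_path_primitive_def)

lemma exp_path_primitive_1: "exp_path_primitive x y 1 = divdiff exp x y"
  by (cases "x = y") (simp add: exp_path_primitive_def divdiff_exp_diag,
      simp add: exp_path_primitive_def divdiff_def)

text \<open>This is the integral formula dmat_fun exp M H = integral over [0,1] of exp(sM) H exp((1-s)M) ds:
  in an eigenbasis of M the integrand has entries exp(s a + (1-s) b) H_ab, with primitive
  exp_path_primitive a b s H_ab.\<close>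
lemma dmat_fun_exp_antiderivative:
  fixes M H :: "real^'n^'n"
  assumes "sym_mat M"
  obtains \<psi> where "\<And>s. (\<psi> has_vector_derivative mat_exp (s *\<^sub>R M) ** H ** mat_exp ((1 - s) *\<^sub>R M)) (at s)"
    and "\<psi> 0 = 0" and "\<psi> 1 = dmat_fun exp M H"
proof -
  obtain Q m where Q: "orthogonal_matrix Q" "M = Q ** diag_mat m ** transpose Q"
    using sym_mat_orthogonal_diagonalization[OF assms] .
  define Y where "Y = basis_change Q H"
  define \<psi> where "\<psi> s = Q ** (\<chi> i j. exp_path_primitive (m$i) (m$j) s * Y$i$j) ** transpose Q" for s
  have "(\<psi> has_vector_derivative
      Q ** (\<chi> i j. exp (s * m$i + (1 - s) * m$j) * Y$i$j) ** transpose Q) (at s)" for s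
    unfolding \<psi>_def
    by (intro has_vector_derivative_orthogonal_conj_entrywise DERIV_cmult_right
        has_real_derivative_exp_path_primitive)
  moreover have "Q ** (\<chi> i j. exp (s * m$i + (1 - s) * m$j) * Y$i$j) ** transpose Q
      = mat_exp (s *\<^sub>R M) ** H ** mat_exp ((1 - s) *\<^sub>R M)" for s
  proof -
    have "(\<chi> i j. exp (s * m$i + (1 - s) * m$j) * Y$i$j)
        = diag_mat (\<chi> i. exp (s * m$i)) ** Y ** diag_mat (\<chi> i. exp ((1 - s) * m$i))"
      by (simp add: vec_eq_iff diag_mat_mult_left diag_mat_mult_right exp_add mult_ac)
    then show ?thesis
      by (simp add: mat_exp_scaleR_decomp[OF Q] Y_def basis_change_def matrix_mul_assoc
          orthogonal_matrix_cancel[OF Q(1)])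
  qed
  moreover have "(\<chi> i j. exp_path_primitive (m$i) (m$j) 0 * Y$i$j) = 0"
    by (simp add: exp_path_primitive_0 vec_eq_iff)
  then have "\<psi> 0 = 0" by (simp add: \<psi>_def)
  moreover have "\<psi> 1 = dmat_fun exp M H"
    by (simp add: \<psi>_def dmat_fun_def spec_apply2_decomp[OF Q] Y_def exp_path_primitive_1)
  ultimately show thesis using that by metis
qed

lemma mat_exp_taylor_bound:
  fixes M N :: "real^'n^'n"
  assumes M: "sym_mat M" and N: "sym_mat N" and close: "norm (N - M) \<le> 1"
  shows "norm (mat_exp N - mat_exp M - dmat_fun exp M (N - M))
     \<le> (CARD('n) * exp (norm M + 1))^3 * (norm (N - M))\<^sup>2"
proof -
  define R where "R = norm M + 1"
  define B where "B = CARD('n) * exp R"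
  define H where "H = N - M"
  have nM: "norm M \<le> R" by (simp add: R_def)
  have nN: "norm N \<le> R" using norm_triangle_ineq[of M "N - M"] close by (simp add: R_def)
  obtain \<psi> where \<psi>': "\<And>s. (\<psi> has_vector_derivative mat_exp (s *\<^sub>R M) ** H ** mat_exp ((1 - s) *\<^sub>R M)) (at s)"
    and \<psi>01: "\<psi> 0 = 0" "\<psi> 1 = dmat_fun exp M H"
    using dmat_fun_exp_antiderivative[OF M] by blast
  define \<phi> where "\<phi> = (\<lambda>s. mat_exp (s *\<^sub>R N) ** mat_exp ((1 - s) *\<^sub>R M) - \<psi> s)"
  have \<phi>': "(\<phi> has_vector_derivative
      (mat_exp (s *\<^sub>R N) - mat_exp (s *\<^sub>R M)) ** H ** mat_exp ((1 - s) *\<^sub>R M)) (at s)" for s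
    using has_vector_derivative_diff[OF has_vector_derivative_mat_exp_path[OF M N] \<psi>']
    by (simp add: \<phi>_def H_def matrix_diff_rdistrib)
  have "norm ((mat_exp (s *\<^sub>R N) - mat_exp (s *\<^sub>R M)) ** H ** mat_exp ((1 - s) *\<^sub>R M))
      \<le> B^3 * (norm H)\<^sup>2" if s: "0 < s" "s < 1" for s
  proof -
    have "norm (mat_exp (s *\<^sub>R N) - mat_exp (s *\<^sub>R M)) \<le> B\<^sup>2 * norm (s *\<^sub>R N - s *\<^sub>R M)"
      unfolding B_def using s nM nN
      by (intro mat_exp_lipschitz sym_mat_scaleR M N norm_scaleR_le) auto
    also have "\<dots> \<le> B\<^sup>2 * norm H"
      using s by (intro mult_left_mono) (simp_all add: H_def mult_left_le_one_le flip: scaleR_diff_right)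
    finally have lip: "norm (mat_exp (s *\<^sub>R N) - mat_exp (s *\<^sub>R M)) \<le> B\<^sup>2 * norm H" .
    have "norm ((mat_exp (s *\<^sub>R N) - mat_exp (s *\<^sub>R M)) ** H ** mat_exp ((1 - s) *\<^sub>R M))
        \<le> norm (mat_exp (s *\<^sub>R N) - mat_exp (s *\<^sub>R M)) * norm H * norm (mat_exp ((1 - s) *\<^sub>R M))"
      by (meson norm_matrix_mult_le order_trans mult_right_mono norm_ge_zero)
    also have "\<dots> \<le> B\<^sup>2 * norm H * norm H * B"
      unfolding B_def using s lip[unfolded B_def]
      by (intro mult_mono norm_mat_exp_scaleR_le M nM) auto
    finally show ?thesis by (simp add: power2_eq_square power3_eq_cube mult_ac)
  qed
  then have "norm (\<phi> 1 - \<phi> 0) \<le> B^3 * (norm H)\<^sup>2"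
    by (rule norm_diff_le_vector_derivative_bound[OF \<phi>'])
  moreover have "\<phi> 1 - \<phi> 0 = mat_exp N - mat_exp M - dmat_fun exp M H"
    by (simp add: \<phi>_def \<psi>01 mat_exp_0)
  ultimately show ?thesis by (simp add: B_def R_def H_def)
qed

theorem mat_exp_has_derivative:
  fixes M :: "real^'n^'n"
  assumes M: "sym_mat M"
  shows "(mat_exp has_derivative dmat_fun exp M) (at M within {X. sym_mat X})"
  unfolding has_derivative_within
proof
  show "bounded_linear (dmat_fun exp M)"
    using bounded_linear_spec_apply2[OF M] by (simp add: dmat_fun_def[abs_def])
  define C where "C = (CARD('n) * exp (norm M + 1))^3"
  have "norm ((1 / norm (N - M)) *\<^sub>R (mat_exp N - (mat_exp M + dmat_fun exp M (N - M))))
      \<le> C * norm (N - M)" if "sym_mat N" "norm (N - M) \<le> 1" for N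
    using mat_exp_taylor_bound[OF M that]
    by (simp add: C_def divide_le_eq power2_eq_square mult_ac diff_diff_eq)
  then have "\<forall>\<^sub>F N in at M within {X. sym_mat X}.
      norm ((1 / norm (N - M)) *\<^sub>R (mat_exp N - (mat_exp M + dmat_fun exp M (N - M))))
      \<le> C * norm (N - M)"
    unfolding eventually_at by (intro exI[of _ 1]) (auto simp: dist_norm)
  moreover have "((\<lambda>N. C * norm (N - M)) \<longlongrightarrow> 0) (at M within {X. sym_mat X})"
    by (intro tendsto_mult_right_zero tendsto_norm_zero LIM_zero tendsto_ident_at)
  ultimately show "((\<lambda>N. (1 / norm (N - M)) *\<^sub>R (mat_exp N - (mat_exp M + dmat_fun exp M (N - M))))
      \<longlongrightarrow> 0) (at M within {X. sym_mat X})"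
    by (rule Lim_null_comparison)
qed

section \<open>The logarithmic rate in an eigenbasis\<close>

lemma divdiff_exp_mult_diff: "divdiff exp a b * (a - b) = exp a - exp b"
  by (simp add: divdiff_def)

lemma exp_diff_mult_cosh_half:
  fixes a b :: real
  shows "(exp a - exp b) * cosh ((a - b) / 2) = (exp a + exp b) * sinh ((a - b) / 2)"
proof -
  define c d where "c = (a + b) / 2" and "d = (a - b) / 2"
  have "exp a = exp c * exp d" "exp b = exp c * exp (- d)"
    by (simp_all add: c_def d_def field_simps flip: exp_add)
  then show ?thesis by (simp add: d_def cosh_def sinh_def algebra_simps)
qed

text \<open>Where the Langevin function comes from: since coth x = 1/x + langevin x, the
  divided difference of exp absorbs the 1/x part.\<close>
lemma divdiff_exp_mult_langevin:
  "divdiff exp a b * ((a - b) * langevin ((a - b) / 2)) = exp a + exp b - 2 * divdiff exp a b"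
proof (cases "a = b")
  case True
  then show ?thesis by (simp add: divdiff_exp_diag langevin_def)
next
  case False
  define d where "d = (a - b) / 2"
  have ab: "a - b = 2 * d" by (simp add: d_def)
  have "d \<noteq> 0" "sinh d \<noteq> 0" using False by (simp_all add: d_def)
  have F: "divdiff exp a b = (exp a - exp b) / (2 * d)" using False by (simp add: divdiff_def ab)
  have coth: "(exp a - exp b) * cosh d / sinh d = exp a + exp b"
    using exp_diff_mult_cosh_half[of a b] \<open>sinh d \<noteq> 0\<close> by (simp add: d_def field_simps)
  have "divdiff exp a b * ((a - b) * langevin d) = (exp a - exp b) * (cosh d / sinh d - 1 / d)"
    using \<open>d \<noteq> 0\<close> by (simp add: F ab langevin_def)
  also have "\<dots> = exp a + exp b - 2 * divdiff exp a b"
    using \<open>d \<noteq> 0\<close> by (simp add: right_diff_distrib coth F) (simp add: field_simps)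
  finally show ?thesis by (simp add: d_def)
qed

lemma divdiff_ln_exp_mult_divdiff_exp: "divdiff ln (exp a) (exp b) * divdiff exp a b = 1"
proof (cases "a = b")
  case True
  have "deriv ln (exp a) = inverse (exp a)" by (rule DERIV_imp_deriv, rule DERIV_ln) simp
  then show ?thesis using True by (simp add: divdiff_def DERIV_imp_deriv[OF DERIV_exp])
qed (simp add: divdiff_def)

lemma divdiff_exp_log_spin_entry:
  "divdiff exp a b * ((a - b) * ((l1 - l2) / 2 - langevin ((a - b) / 2) * ((l1 + l2) / 2)) - (l1 + l2))
     = - (l1 * exp b + exp a * l2)"
proof -
  have "divdiff exp a b * ((a - b) * ((l1 - l2) / 2 - langevin ((a - b) / 2) * ((l1 + l2) / 2)) - (l1 + l2))
      = divdiff exp a b * (a - b) * (l1 - l2) / 2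
        - divdiff exp a b * ((a - b) * langevin ((a - b) / 2)) * (l1 + l2) / 2
        - divdiff exp a b * (l1 + l2)"
    by (simp add: algebra_simps)
  also have "\<dots> = (exp a - exp b) * (l1 - l2) / 2 - (exp a + exp b - 2 * divdiff exp a b) * (l1 + l2) / 2
        - divdiff exp a b * (l1 + l2)"
    by (simp only: divdiff_exp_mult_langevin divdiff_exp_mult_diff)
  also have "\<dots> = - (l1 * exp b + exp a * l2)"
    by (simp add: field_simps)
  finally show ?thesis .
qed

lemma basis_change_Ad:
  assumes "orthogonal_matrix Q" "G = Q ** diag_mat g ** transpose Q"
  shows "basis_change Q (Ad G X) = (\<chi> i j. (g$i - g$j) / 2 * basis_change Q X $i$j)"
proof -
  have G: "basis_change Q G = diag_mat g" using assms by (simp add: basis_change_inverse)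
  show ?thesis
    using assms(1) by (simp add: Ad_def basis_change_scaleR basis_change_diff basis_change_mult G
        vec_eq_iff diag_mat_mult_left diag_mat_mult_right algebra_simps)
qed

lemma basis_change_uminus: "basis_change Q (- X) = - basis_change Q X"
  by (simp add: basis_change_def matrix_mult_neg_right matrix_mult_neg_left)

lemma bounded_linear_dmat_fun: "sym_mat M \<Longrightarrow> bounded_linear (dmat_fun f M)"
  using bounded_linear_spec_apply2 by (simp add: dmat_fun_def[abs_def])

lemma dmat_fun_exp_log_spin:
  fixes G L :: "real^'n^'n"
  assumes sG: "sym_mat G"
  defines "D \<equiv> (1/2) *\<^sub>R (L + transpose L)" and "W \<equiv> (1/2) *\<^sub>R (L - transpose L)"
  shows "dmat_fun exp G (2 *\<^sub>R Ad G (W - Ad_fun langevin G D) - 2 *\<^sub>R D)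
       = - (L ** mat_exp G + mat_exp G ** transpose L)"
proof -
  obtain Q g where Q: "orthogonal_matrix Q" "G = Q ** diag_mat g ** transpose Q"
    using sym_mat_orthogonal_diagonalization[OF sG] .
  have expG: "basis_change Q (mat_exp G) = diag_mat (\<chi> i. exp (g$i))"
    by (simp add: mat_exp_def mat_fun_decomp[OF Q] basis_change_inverse[OF Q(1)])
  define l where "l = basis_change Q L"
  have D: "basis_change Q D $i$j = (l$i$j + l$j$i) / 2" for i j
    by (simp add: D_def l_def basis_change_scaleR basis_change_add basis_change_transpose transpose_nth)
  have W: "basis_change Q W $i$j = (l$i$j - l$j$i) / 2" for i j
    by (simp add: W_def l_def basis_change_scaleR basis_change_diff basis_change_transpose transpose_nth)
  have "basis_change Q (dmat_fun exp G (2 *\<^sub>R Ad G (W - Ad_fun langevin G D) - 2 *\<^sub>R D)) $i$j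
      = divdiff exp (g$i) (g$j) * ((g$i - g$j) * ((l$i$j - l$j$i) / 2
          - langevin ((g$i - g$j) / 2) * ((l$i$j + l$j$i) / 2)) - (l$i$j + l$j$i))" for i j
    by (simp add: dmat_fun_def Ad_fun_def basis_change_spec_apply2[OF Q] basis_change_Ad[OF Q]
        basis_change_diff basis_change_scaleR D W field_simps)
  also have "\<dots> i j = basis_change Q (- (L ** mat_exp G + mat_exp G ** transpose L)) $i$j" for i j
    unfolding divdiff_exp_log_spin_entry
    by (simp add: basis_change_uminus basis_change_diff basis_change_mult[OF Q(1)]
        basis_change_transpose expG l_def diag_mat_mult_left diag_mat_mult_right transpose_nth)
  finally have "basis_change Q (dmat_fun exp G (2 *\<^sub>R Ad G (W - Ad_fun langevin G D) - 2 *\<^sub>R D))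
      = basis_change Q (- (L ** mat_exp G + mat_exp G ** transpose L))"
    unfolding vec_eq_iff by blast
  then show ?thesis by (rule basis_change_inj[OF Q(1)])
qed

lemma dmat_fun_ln_exp_inverse:
  fixes G X :: "real^'n^'n"
  assumes "sym_mat G"
  shows "dmat_fun ln (mat_exp G) (dmat_fun exp G X) = X"
proof -
  obtain Q g where Q: "orthogonal_matrix Q" "G = Q ** diag_mat g ** transpose Q"
    using sym_mat_orthogonal_diagonalization[OF assms] .
  have expG: "mat_exp G = Q ** diag_mat (\<chi> i. exp (g$i)) ** transpose Q"
    by (simp add: mat_exp_def mat_fun_decomp[OF Q])
  have "basis_change Q (dmat_fun ln (mat_exp G) (dmat_fun exp G X)) = basis_change Q X"
    by (simp add: dmat_fun_def basis_change_spec_apply2[OF Q(1) expG] basis_change_spec_apply2[OF Q]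
        vec_eq_iff mult.assoc[symmetric] divdiff_ln_exp_mult_divdiff_exp)
  then show ?thesis by (rule basis_change_inj[OF Q(1)])
qed

lemma upper_convected_rate_log_rate:
  fixes G L Z :: "real^'n^'n"
  assumes sG: "sym_mat G"
  defines "D \<equiv> (1/2) *\<^sub>R (L + transpose L)"
    and "Omega \<equiv> (1/2) *\<^sub>R (L - transpose L) - Ad_fun langevin G ((1/2) *\<^sub>R (L + transpose L))"
  shows "dmat_fun exp G Z - L ** mat_exp G - mat_exp G ** transpose L
       = dmat_fun exp G (Z + 2 *\<^sub>R Ad G Omega - 2 *\<^sub>R D)"
    and "Z + 2 *\<^sub>R Ad G Omega
       = 2 *\<^sub>R D + dmat_fun ln (mat_exp G) (dmat_fun exp G Z - L ** mat_exp G - mat_exp G ** transpose L)"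
proof -
  have "dmat_fun exp G (Z + (2 *\<^sub>R Ad G Omega - 2 *\<^sub>R D))
      = dmat_fun exp G Z + dmat_fun exp G (2 *\<^sub>R Ad G Omega - 2 *\<^sub>R D)"
    by (rule linear_add[OF bounded_linear.linear[OF bounded_linear_dmat_fun[OF sG]]])
  also have "dmat_fun exp G (2 *\<^sub>R Ad G Omega - 2 *\<^sub>R D)
      = - (L ** mat_exp G + mat_exp G ** transpose L)"
    unfolding Omega_def D_def by (rule dmat_fun_exp_log_spin[OF sG])
  finally show rate: "dmat_fun exp G Z - L ** mat_exp G - mat_exp G ** transpose L
      = dmat_fun exp G (Z + 2 *\<^sub>R Ad G Omega - 2 *\<^sub>R D)"
    by (simp add: add_diff_eq)
  show "Z + 2 *\<^sub>R Ad G Omega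
      = 2 *\<^sub>R D + dmat_fun ln (mat_exp G) (dmat_fun exp G Z - L ** mat_exp G - mat_exp G ** transpose L)"
    unfolding rate dmat_fun_ln_exp_inverse[OF sG] by simp
qed

lemma smooth_on_imp_differentiable_at:
  assumes "smooth_on f U" "open U" "p \<in> U"
  shows "f differentiable (at p)"
proof -
  have "Ck_on (Suc 0) f U" using assms(1) by (simp add: smooth_on_def)
  then have "f differentiable (at p within U)" using assms(3) by (simp add: differentiable_on_def)
  then show ?thesis using at_within_open[OF assms(3,2)] by simp
qed

lemma dt_convect_mat_exp:
  fixes G :: "real \<times> (real^'n) \<Rightarrow> real^'n^'n"
  assumes "G differentiable (at p)" "open U" "p \<in> U" "\<And>q. q \<in> U \<Longrightarrow> sym_mat (G q)"
  shows "dt (\<lambda>q. mat_exp (G q)) p + convect v (\<lambda>q. mat_exp (G q)) p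
       = dmat_fun exp (G p) (dt G p + convect v G p)"
proof -
  have dG: "(G has_derivative frechet_derivative G (at p)) (at p within U)"
    using has_derivative_at_withinI[OF assms(1)[unfolded frechet_derivative_works]] .
  have "((\<lambda>q. mat_exp (G q)) has_derivative (\<lambda>h. dmat_fun exp (G p) (frechet_derivative G (at p) h)))
      (at p within U)"
    using mat_exp_has_derivative assms(4)
    by (intro has_derivative_in_compose2[of "{X. sym_mat X}", OF _ _ assms(3) dG]) auto
  then have "frechet_derivative (\<lambda>q. mat_exp (G q)) (at p)
      = (\<lambda>h. dmat_fun exp (G p) (frechet_derivative G (at p) h))"
    unfolding at_within_open[OF assms(3,2)] by (rule frechet_derivative_at[symmetric])
  moreover have "linear (dmat_fun exp (G p))"
    using bounded_linear_dmat_fun[OF assms(4)[OF assms(3)]] by (rule bounded_linear.linear)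
  ultimately show ?thesis by (simp add: dt_def convect_def linear_add)
qed

theorem mainTheorem14:
  fixes T :: real and U :: "(real \<times> (real^'n::finite)) set"
    and v :: "real \<times> (real^'n) \<Rightarrow> real^'n"
    and G :: "real \<times> (real^'n) \<Rightarrow> real^'n^'n"
  assumes "open U" and "U \<subseteq> {0<..<T} \<times> UNIV"
    and "smooth_on v U" and "smooth_on G U"
    and "\<And>p. p \<in> U \<Longrightarrow> sym_mat (G p)"
    and "p \<in> U"
  shows
   "let A = (\<lambda>q. mat_exp (G q));
        W = (1/2) *\<^sub>R (grad_v v p - transpose (grad_v v p));
        D = (1/2) *\<^sub>R (grad_v v p + transpose (grad_v v p));
        Omega = W - Ad_fun langevin (G p) D;
        Glog = dt G p + convect v G p + 2 *\<^sub>R Ad (G p) Omega;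
        Aup = dt A p + convect v A p - grad_v v p ** A p - A p ** transpose (grad_v v p)
    in Glog = 2 *\<^sub>R D + dmat_fun ln (A p) Aup
     \<and> Aup = dmat_fun exp (G p) (Glog - 2 *\<^sub>R D)"
proof -
  have "sym_mat (G p)" using assms(5,6) .
  moreover have "dt (\<lambda>q. mat_exp (G q)) p + convect v (\<lambda>q. mat_exp (G q)) p
      = dmat_fun exp (G p) (dt G p + convect v G p)"
    by (rule dt_convect_mat_exp[OF smooth_on_imp_differentiable_at[OF assms(4,1,6)] assms(1,6,5)])
  ultimately show ?thesis
    using upper_convected_rate_log_rate[of "G p" "dt G p + convect v G p" "grad_v v p"]
    unfolding Let_def by simp
qed

end
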